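(* An ordering of the features by modification cost does not in general determine which recourse is ideal. Precisely: there exist - a finite feature set $\mathcal{F}$, - a finite set $\mathcal{R}$ of pairwise disjoint nonempty recourses $R\subseteq\mathcal{F}$, - a recourse $R\in\mathcal{R}$, and - two strength assignments $\beta,\beta':\mathcal{F}\to\mathbb{R}$ that induce the same ordering of $\mathcal{F}$ (that is, $\beta_f<\beta_g \iff \beta'_f<\beta'_g$ for all $f,g\in\mathcal{F}$), such that $R$ is ideal with respect to $\mathcal{R}$ under $\beta$ but not ideal with respect to $\mathcal{R}$ under $\beta'$.
   Context: Let $\mathcal{F}$ be a finite set of features. A strength assignment is a function $\beta:\mathcal{F}\to\mathbb{R}$, written $f\mapsto\beta_f$. The cost of modifying feature $f$ is $\mathrm{Cost}(f)=-\beta_f$. For distinct $f,g\in\mathcal{F}$, the probability that $f$ is easier to modify than $g$ is given by the Bradley–Terry model: $$p_{f>g}=\frac{e^{\beta_f}}{e^{\beta_f}+e^{\beta_g}}.$$ A recourse is a nonempty subset $R\subseteq\mathcal{F}$ (the set of features it modifies). For disjoint recourses $R_1,R_2$ with $|R_1|=m$ and $|R_2|=n$, the probability that $R_1$ is easier to implement than $R_2$ is $$\rho_{R_1>R_2}=\frac{1}{mn}\sum_{f\in R_1,\,g\in R_2}p_{f>g}.$$ Given a finite set $\mathcal{R}$ of pairwise disjoint candidate recourses (for the same data instance) and $R\in\mathcal{R}$, $R$ is ideal with respect to $\mathcal{R}$ under $\beta$ if there is no $R'\in\mathcal{R}\setminus\{R\}$ with $\rho_{R>R'}<\rho_{R'>R}$.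 Otherwise $R$ is non-ideal. *)

theory Defs
  imports Complex_Main
begin

text \<open>Bradley--Terry probability that feature f is easier to modify than g.\<close>
definition p_easier :: "('f \<Rightarrow> real) \<Rightarrow> 'f \<Rightarrow> 'f \<Rightarrow> real" where
  "p_easier \<beta> f g = exp (\<beta> f) / (exp (\<beta> f) + exp (\<beta> g))"

definition rho :: "('f \<Rightarrow> real) \<Rightarrow> 'f set \<Rightarrow> 'f set \<Rightarrow> real" where
  "rho \<beta> R1 R2 = (1 / (real (card R1) * real (card R2))) *
     (\<Sum>f\<in>R1. \<Sum>g\<in>R2. p_easier \<beta> f g)"

definition ideal :: "('f \<Rightarrow> real) \<Rightarrow> 'f set set \<Rightarrow> 'f set \<Rightarrow> bool" where
  "ideal \<beta> RR R \<longleftrightarrow> \<not> (\<exists>R'\<in>RR - {R}. rho \<beta> R R' < rho \<beta> R' R)"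

end

theory Submission
  imports Defs
begin

text \<open>Since p(f>g) + p(g>f) = 1, the two comparison probabilities between disjoint
recourses add up to 1, so R beats a single rival R' exactly when rho(R>R') is at least 1/2.
Take features 0, 1, 2 with strengths 0, -1, c and the recourses {0} and {1,2}: then
{0} is ideal iff p(0>1) + p(0>2) >= 1, i.e. p(0>2) >= p(1>0), i.e. c <= 1.
The strengths with c = 1 and c = 2 order the features identically, but only the first
makes {0} ideal.\<close>

lemma p_easier_eq_logistic: "p_easier \<beta> f g = 1 / (1 + exp (\<beta> g - \<beta> f))"
  by (simp add: p_easier_def exp_diff field_simps add_pos_pos)

lemma p_easier_le_iff: "p_easier \<beta> f g \<le> p_easier \<gamma> h k \<longleftrightarrow> \<gamma> k - \<gamma> h \<le> \<beta> g - \<beta> f"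
proof -
  have "\<And>x. 0 < 1 + exp (x::real)"
    by (simp add: add_pos_pos)
  then show ?thesis
    by (simp add: p_easier_eq_logistic field_simps)
qed

lemma p_easier_add_swap: "p_easier \<beta> f g + p_easier \<beta> g f = 1"
proof -
  have "0 < exp (\<beta> f) + exp (\<beta> g)"
    by (simp add: add_pos_pos)
  then show ?thesis
    by (simp add: p_easier_def add.commute add_divide_distrib [symmetric])
qed

lemma rho_add_swap:
  assumes "finite R1" "finite R2" "R1 \<noteq> {}" "R2 \<noteq> {}"
  shows "rho \<beta> R1 R2 + rho \<beta> R2 R1 = 1"
proof -
  have "(\<Sum>f\<in>R1. \<Sum>g\<in>R2. p_easier \<beta> f g) + (\<Sum>g\<in>R2. \<Sum>f\<in>R1. p_easier \<beta> g f)
      = (\<Sum>f\<in>R1. \<Sum>g\<in>R2. p_easier \<beta> f g + p_easier \<beta> g f)"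
    by (simp add: sum.swap [of _ R2] sum.distrib)
  also have "\<dots> = real (card R1) * real (card R2)"
    by (simp add: p_easier_add_swap)
  finally show ?thesis
    using assms by (simp add: rho_def field_simps)
qed

lemma ideal_pair_iff:
  assumes "R \<noteq> R'" "finite R" "finite R'" "R \<noteq> {}" "R' \<noteq> {}"
  shows "ideal \<beta> {R, R'} R \<longleftrightarrow> 1 / 2 \<le> rho \<beta> R R'"
  using rho_add_swap [OF assms(2-5), of \<beta>] assms(1) by (auto simp: ideal_def)

lemma rho_singleton_pair:
  assumes "g \<noteq> h"
  shows "rho \<beta> {f} {g, h} = (p_easier \<beta> f g + p_easier \<beta> f h) / 2"
  using assms by (simp add: rho_def)

definition strengths :: "real \<Rightarrow> nat \<Rightarrow> real" where
  "strengths c = (\<lambda>n. if n = 0 then 0 else if n = 1 then -1 else c)"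

lemma ideal_strengths_iff: "ideal (strengths c) {{0}, {1, 2}} {0} \<longleftrightarrow> c \<le> 1"
proof -
  let ?p = "p_easier (strengths c)"
  have "ideal (strengths c) {{0}, {1, 2}} {0} \<longleftrightarrow> 1 \<le> ?p 0 1 + ?p 0 2"
    by (simp add: ideal_pair_iff rho_singleton_pair)
  also have "\<dots> \<longleftrightarrow> ?p 1 0 \<le> ?p 0 2"
    using p_easier_add_swap [of "strengths c" 0 1] by linarith
  also have "\<dots> \<longleftrightarrow> c \<le> 1"
    by (simp add: p_easier_le_iff strengths_def)
  finally show ?thesis .
qed

theorem theorem1:
  shows "\<exists>(F :: nat set) (RR :: nat set set) R (\<beta> :: nat \<Rightarrow> real) \<beta>'.
    finite F \<and> finite RR \<and>
    (\<forall>R'\<in>RR. R' \<noteq> {} \<and> R' \<subseteq> F) \<and>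
    (\<forall>R1\<in>RR. \<forall>R2\<in>RR. R1 \<noteq> R2 \<longrightarrow> R1 \<inter> R2 = {}) \<and>
    R \<in> RR \<and>
    (\<forall>f\<in>F. \<forall>g\<in>F. \<beta> f < \<beta> g \<longleftrightarrow> \<beta>' f < \<beta>' g) \<and>
    ideal \<beta> RR R \<and> \<not> ideal \<beta>' RR R"
proof -
  have same_order: "\<forall>f\<in>{0, 1, 2}. \<forall>g\<in>{0, 1, 2::nat}.
      strengths 1 f < strengths 1 g \<longleftrightarrow> strengths 2 f < strengths 2 g"
    by (auto simp: strengths_def)
  have "ideal (strengths 1) {{0}, {1, 2}} {0}" "\<not> ideal (strengths 2) {{0}, {1, 2}} {0}"
    using ideal_strengths_iff [of 1] ideal_strengths_iff [of 2] by simp_all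
  with same_order show ?thesis
    by (rule_tac x = "{0, 1, 2}" in exI, rule_tac x = "{{0}, {1, 2}}" in exI,
        rule_tac x = "{0}" in exI, rule_tac x = "strengths 1" in exI,
        rule_tac x = "strengths 2" in exI) auto
qed

end
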